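(* Let $(X,d)$ be a complete metric space and let $G:X\times X\to X$ be a mapping such that (i) $G(x,x)=x$ for all $x\in X$, and (ii) for $x,y\in X$, $G(x,y)=x$ implies $y=x$. Let $T:X\to P_{cl}(X)$ be a multivalued operator with $SFix(T)\neq\emptyset$ and let $T_G(x)=\{G(x,u):u\in T(x)\}$ be the admissible perturbation of $T$ corresponding to $G$. Suppose there exist $\alpha,\beta,\gamma\ge0$ with $\alpha+\beta+\gamma<1$ such that $$H(T_G(x),T_G(y))\le\alpha d(x,y)+\beta D(x,T_G(y))+\gamma D(y,T_G(x))\quad\text{for all }x,y\in X,$$ and that (iii) there exists $L>0$ with $D(x,T_G(x))\le L\,D(x,T(x))$ for every $x\in X$. Then the strict fixed point problem $T(x)=\{x\}$ is Ulam–Hyers stable: there exists $c>0$ such that for every $\varepsilon>0$ and every $y^*\in X$ with $D(y^*,T(y^* ))\le\varepsilon$ there exists $x^*\in SFix(T)$ with $d(y^*,x^* )\le c\varepsilon$.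
   Context: $P_{cl}(X)$ is the family of nonempty closed subsets of $X$; $SFix(T)=\{x:T(x)=\{x\}\}$. For nonempty $A,B\subseteq X$: $D(a,B)=\inf_{b\in B}d(a,b)$, $e(A,B)=\sup_{a\in A}D(a,B)$, $H(A,B)=\max\{e(A,B),e(B,A)\}$. *)

theory Defs
  imports "HOL-Analysis.Analysis"
begin

text \<open>D(a,B) = inf of distances; for nonempty B this is the library's infdist.\<close>
definition Dpt :: "'a::metric_space \<Rightarrow> 'a set \<Rightarrow> real" where
  "Dpt a B = infdist a B"

text \<open>Excess and Pompeiu-Hausdorff functional, valued in the extended reals
  (they may be infinite for unbounded sets).\<close>
definition excess :: "'a::metric_space set \<Rightarrow> 'a set \<Rightarrow> ereal" where
  "excess A B = (SUP a\<in>A. ereal (Dpt a B))"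

definition Hpom :: "'a::metric_space set \<Rightarrow> 'a set \<Rightarrow> ereal" where
  "Hpom A B = max (excess A B) (excess B A)"

definition SFix :: "('a \<Rightarrow> 'a set) \<Rightarrow> 'a set" where
  "SFix T = {x. T x = {x}}"

definition admissible_perturbation :: "('a \<Rightarrow> 'a \<Rightarrow> 'a) \<Rightarrow> ('a \<Rightarrow> 'a set) \<Rightarrow> 'a \<Rightarrow> 'a set" where
  "admissible_perturbation G T x = {G x u | u. u \<in> T x}"

end

theory Submission
  imports Defs
begin

text \<open>A strict fixed point \<open>z\<close> of \<open>T\<close> is also one of \<open>T\<^sub>G\<close>, because \<open>G(z,z) = z\<close>.
  Applying the contraction condition to the pair \<open>(y, z)\<close>, the Pompeiu-Hausdorff distance
  between \<open>T\<^sub>G(y)\<close> and \<open>{z}\<close> bounds both \<open>D(z, T\<^sub>G(y))\<close> and the distance of every point of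
  \<open>T\<^sub>G(y)\<close> from \<open>z\<close>; with the triangle inequality this gives
  \<open>(1 - \<alpha> - \<beta> - \<gamma>) d(y, z) \<le> (1 - \<gamma>) D(y, T\<^sub>G(y)) \<le> (1 - \<gamma>) L D(y, T(y))\<close>.\<close>

lemma Dpt_singleton [simp]: "Dpt a {z} = dist a z"
  by (simp add: Dpt_def infdist_singleton)

lemma Dpt_le_Hpom_left:
  assumes "a \<in> A"
  shows "ereal (Dpt a B) \<le> Hpom A B"
proof -
  have "ereal (Dpt a B) \<le> excess A B"
    unfolding excess_def using assms by (rule SUP_upper)
  then show ?thesis
    unfolding Hpom_def using max.cobounded1 by (rule order_trans)
qed

lemma Dpt_le_Hpom_right:
  assumes "b \<in> B"
  shows "ereal (Dpt b A) \<le> Hpom A B"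
  using Dpt_le_Hpom_left[OF assms, of A] by (simp add: Hpom_def max.commute)

lemma admissible_perturbation_nonempty:
  "T x \<noteq> {} \<Longrightarrow> admissible_perturbation G T x \<noteq> {}"
  by (auto simp: admissible_perturbation_def)

lemma admissible_perturbation_strict_fixed_point:
  assumes "z \<in> SFix T" and "G z z = z"
  shows "admissible_perturbation G T z = {z}"
  using assms by (auto simp: SFix_def admissible_perturbation_def)

lemma dist_strict_fixed_point_le_Dpt:
  fixes F :: "'a::metric_space \<Rightarrow> 'a set"
  assumes Fz: "F z = {z}"
    and Fy_ne: "F y \<noteq> {}"
    and \<gamma>: "0 \<le> \<gamma>" "\<gamma> \<le> 1"
    and contr: "Hpom (F y) (F z)
        \<le> ereal (\<alpha> * dist y z + \<beta> * Dpt y (F z) + \<gamma> * Dpt z (F y))"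
  shows "(1 - \<alpha> - \<beta> - \<gamma>) * dist y z \<le> (1 - \<gamma>) * Dpt y (F y)"
proof -
  define d where "d = dist y z"
  define r where "r = (\<alpha> + \<beta>) * d + \<gamma> * Dpt z (F y)"
  have H_le_r: "Hpom (F y) {z} \<le> ereal r"
    using contr by (simp add: Fz r_def d_def algebra_simps)
  have "ereal (Dpt z (F y)) \<le> ereal r"
    using Dpt_le_Hpom_right[of z "{z}" "F y"] H_le_r by (simp del: ereal_less_eq)
  then have Dz: "(1 - \<gamma>) * Dpt z (F y) \<le> (\<alpha> + \<beta>) * d"
    by (simp add: r_def algebra_simps)
  have "d - r \<le> dist y u" if "u \<in> F y" for u
  proof -
    have "ereal (dist u z) \<le> ereal r"
      using Dpt_le_Hpom_left[OF that, of "{z}"] H_le_r by (simp del: ereal_less_eq)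
    moreover have "d \<le> dist y u + dist u z"
      unfolding d_def by (rule dist_triangle)
    ultimately show ?thesis by simp
  qed
  then have "d - r \<le> Dpt y (F y)"
    using Fy_ne unfolding Dpt_def by (simp add: infdist_def le_cINF_iff)
  then have "(1 - \<gamma>) * (d - r) \<le> (1 - \<gamma>) * Dpt y (F y)"
    using \<gamma> by (simp add: mult_left_mono)
  moreover have "(1 - \<gamma>) * r \<le> (\<alpha> + \<beta>) * d"
  proof -
    have "(1 - \<gamma>) * r = (1 - \<gamma>) * (\<alpha> + \<beta>) * d + \<gamma> * ((1 - \<gamma>) * Dpt z (F y))"
      by (simp add: r_def algebra_simps)
    also have "\<dots> \<le> (1 - \<gamma>) * (\<alpha> + \<beta>) * d + \<gamma> * ((\<alpha> + \<beta>) * d)"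
      using Dz \<gamma> by (simp add: mult_left_mono)
    finally show ?thesis by (simp add: algebra_simps)
  qed
  ultimately show ?thesis
    by (simp add: d_def algebra_simps)
qed

theorem mainTheorem5:
  fixes G :: "'a::complete_space \<Rightarrow> 'a \<Rightarrow> 'a"
    and T :: "'a \<Rightarrow> 'a set"
    and \<alpha> \<beta> \<gamma> L :: real
  assumes G_diag: "\<And>x. G x x = x"
    and G_inj: "\<And>x y. G x y = x \<Longrightarrow> y = x"
    and T_ne: "\<And>x. T x \<noteq> {}"
    and T_closed: "\<And>x. closed (T x)"
    and SFix_ne: "SFix T \<noteq> {}"
    and coef: "\<alpha> \<ge> 0" "\<beta> \<ge> 0" "\<gamma> \<ge> 0" "\<alpha> + \<beta> + \<gamma> < 1"
    and contr: "\<And>x y. Hpom (admissible_perturbation G T x) (admissible_perturbation G T y)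
        \<le> ereal (\<alpha> * dist x y + \<beta> * Dpt x (admissible_perturbation G T y)
                  + \<gamma> * Dpt y (admissible_perturbation G T x))"
    and L_pos: "L > 0"
    and L_bound: "\<And>x. Dpt x (admissible_perturbation G T x) \<le> L * Dpt x (T x)"
  shows "\<exists>c>0. \<forall>\<epsilon>>0. \<forall>y. Dpt y (T y) \<le> \<epsilon> \<longrightarrow>
           (\<exists>x\<in>SFix T. dist y x \<le> c * \<epsilon>)"
proof -
  let ?TG = "admissible_perturbation G T"
  obtain z where z: "z \<in> SFix T" using SFix_ne by blast
  define c where "c = (1 - \<gamma>) * L / (1 - \<alpha> - \<beta> - \<gamma>)"
  have gap: "1 - \<alpha> - \<beta> - \<gamma> > 0" and "1 - \<gamma> > 0" using coef by linarith+
  then have "c > 0" using L_pos by (simp add: c_def)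
  moreover have "dist y z \<le> c * \<epsilon>" if "Dpt y (T y) \<le> \<epsilon>" for y \<epsilon>
  proof -
    have "(1 - \<alpha> - \<beta> - \<gamma>) * dist y z \<le> (1 - \<gamma>) * Dpt y (?TG y)"
      using coef contr[of y z]
      by (intro dist_strict_fixed_point_le_Dpt admissible_perturbation_strict_fixed_point
          admissible_perturbation_nonempty z G_diag T_ne) auto
    also have "\<dots> \<le> (1 - \<gamma>) * (L * \<epsilon>)"
      using L_bound[of y] that L_pos \<open>1 - \<gamma> > 0\<close> by (simp add: order_trans)
    finally show ?thesis
      using gap by (simp add: c_def field_simps)
  qed
  ultimately show ?thesis
    using z by blast
qed

end
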